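(* Let $m\ge1$, $\boldsymbol\gamma=(\gamma_1,\ldots,\gamma_m)\in\mathbb{N}^m$, and let $f_1,\ldots,f_{m+1}$ be multiplicative arithmetic functions. Then the function $S^{\boldsymbol\gamma}_{f_1,\ldots,f_{m+1}}$ of $m+1$ variables is multiplicative.
   Context: An arithmetic function is a map $f:\mathbb{N}\to\mathbb{C}$, with $f(x)=0$ for $x\notin\mathbb{N}$. It is multiplicative if $f(ab)=f(a)f(b)$ whenever $\gcd(a,b)=1$. The multiple Ramanujan sum is \[ S^{\boldsymbol\gamma}_{f_1,\ldots,f_{m+1}}(n_1,\ldots,n_{m+1}):=\sum_{\substack{(d_1,\ldots,d_m)\in\mathbb{N}^m\\ d_j^{\gamma_j}\mid\gcd(n_1,\ldots,n_{j+1})\ (1\le j\le m)}} f_1\Bigl(\frac{n_1}{d_1^{\gamma_1}}\Bigr)f_2\Bigl(\frac{d_1^{\gamma_1}}{d_2^{\gamma_2}}\Bigr)\cdots f_m\Bigl(\frac{d_{m-1}^{\gamma_{m-1}}}{d_m^{\gamma_m}}\Bigr)f_{m+1}\bigl(d_m^{\gamma_m}\bigr). \] A function $F:\mathbb{N}^k\to\mathbb{C}$ is called multiplicative if $F(m_1n_1,\ldots,m_kn_k)=F(m_1,\ldots,m_k)F(n_1,\ldots,n_k)$ for all $(m_1,\ldots,m_k),(n_1,\ldots,n_k)\in\mathbb{N}^k$ that are relatively prime, i.e. $\gcd(m_1\cdots m_k,\,n_1\cdots n_k)=1$. *)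

theory Defs
  imports Complex_Main "HOL-Library.FuncSet"
begin

text \<open>Arithmetic functions are modelled as maps nat to complex; only values at
positive arguments matter. Multiplicativity as in the paper.\<close>
definition multiplicative_arith :: "(nat \<Rightarrow> complex) \<Rightarrow> bool" where
  "multiplicative_arith f \<longleftrightarrow>
     (\<forall>a b. a > 0 \<longrightarrow> b > 0 \<longrightarrow> coprime a b \<longrightarrow> f (a * b) = f a * f b)"

text \<open>f evaluated at the rational a/b, with the convention f(x) = 0 for x not in N
(for positive a, b).\<close>
definition arith_at_quot :: "(nat \<Rightarrow> complex) \<Rightarrow> nat \<Rightarrow> nat \<Rightarrow> complex" where
  "arith_at_quot f a b = (if b dvd a then f (a div b) else 0)"

text \<open>Multiplicativity of a function of k variables; a tuple in N^k is a function
nat to nat considered on the indices 1..k.\<close>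
definition multiplicative_multi :: "nat \<Rightarrow> ((nat \<Rightarrow> nat) \<Rightarrow> complex) \<Rightarrow> bool" where
  "multiplicative_multi k F \<longleftrightarrow>
     (\<forall>a b. (\<forall>i\<in>{1..k}. a i > 0 \<and> b i > 0) \<longrightarrow>
        coprime (\<Prod>i\<in>{1..k}. a i) (\<Prod>i\<in>{1..k}. b i) \<longrightarrow>
        F (\<lambda>i. a i * b i) = F a * F b)"

text \<open>The multiple Ramanujan sum. Parameters: m, gamma (indices 1..m),
f (indices 1..m+1), n (indices 1..m+1). Tuples d in N^m are extensional
functions on {1..m}.\<close>
definition multiple_ramanujan_sum ::
  "nat \<Rightarrow> (nat \<Rightarrow> nat) \<Rightarrow> (nat \<Rightarrow> nat \<Rightarrow> complex) \<Rightarrow> (nat \<Rightarrow> nat) \<Rightarrow> complex" where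
  "multiple_ramanujan_sum m \<gamma> f n =
     (\<Sum>d\<in>(\<Pi>\<^sub>E j\<in>{1..m}. {e. e > 0 \<and> e ^ \<gamma> j dvd Gcd (n ` {1..j+1})}).
        arith_at_quot (f 1) (n 1) (d 1 ^ \<gamma> 1)
        * (\<Prod>j\<in>{2..m}. arith_at_quot (f j) (d (j - 1) ^ \<gamma> (j - 1)) (d j ^ \<gamma> j))
        * f (m + 1) (d m ^ \<gamma> m))"

end

theory Submission
  imports Defs
begin

text \<open>Let \<open>n\<close> and \<open>n'\<close> be tuples whose entries are coprime to each other. A tuple
  \<open>d\<close> admissible for the pointwise product \<open>n n'\<close> splits uniquely as \<open>d = d' d''\<close>
  with \<open>d'\<^sub>j = gcd(d\<^sub>j, n\<^sub>1)\<close> admissible for \<open>n\<close> and \<open>d''\<^sub>j = gcd(d\<^sub>j, n'\<^sub>1)\<close> admissible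
  for \<open>n'\<close>. The summand is a product of values \<open>f\<^sub>j(c\<^sub>j\<^sub>-\<^sub>1 / c\<^sub>j)\<close> along the chain
  \<open>n\<^sub>1, d\<^sub>1\<^bsup>\<gamma>\<^sub>1\<^esup>, \<dots>, d\<^sub>m\<^bsup>\<gamma>\<^sub>m\<^esup>, 1\<close>; the chains of \<open>d'\<close> and \<open>d''\<close> are coprime to each other, so a
  quotient of the product chains is integral exactly when both quotients are, and each
  factor splits by multiplicativity of \<open>f\<^sub>j\<close>. Summing over the bijection
  \<open>(d', d'') \<mapsto> d' d''\<close> gives \<open>S(n n') = S(n) S(n')\<close>.\<close>

lemma power_dvd_imp_dvd:
  fixes x c :: "'a::comm_semiring_1"
  assumes "k \<ge> 1" and "x ^ k dvd c"
  shows "x dvd c"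
  using assms by (meson dvd_power dvd_trans less_le_trans zero_less_one)

lemma gcd_mult_gcd_eq_self:
  fixes a b c :: nat
  assumes "coprime a b" and "c dvd a * b"
  shows "gcd c a * gcd c b = c"
proof -
  obtain u v where c: "c = u * v" and "u dvd a" and "v dvd b"
    using division_decomp[OF assms(2)] by blast
  have "coprime a v" "coprime b u"
    using \<open>u dvd a\<close> \<open>v dvd b\<close> assms(1) coprime_divisors coprime_commute dvd_refl by metis+
  then have "gcd c a = u" "gcd c b = v"
    using \<open>u dvd a\<close> \<open>v dvd b\<close> unfolding c
    by (simp_all add: gcd_mult_left_right_cancel gcd_mult_left_left_cancel gcd_nat.absorb1)
  then show ?thesis
    using c by simp
qed

lemma arith_at_quot_mult:
  fixes x1 x2 y1 y2 :: nat
  assumes f: "multiplicative_arith f"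
    and "coprime x1 x2" and "coprime x1 y2" and "coprime y1 x2"
    and "x1 > 0" and "x2 > 0"
  shows "arith_at_quot f (x1 * x2) (y1 * y2) = arith_at_quot f x1 y1 * arith_at_quot f x2 y2"
proof (cases "y1 dvd x1 \<and> y2 dvd x2")
  case True
  then obtain u v where u: "x1 = y1 * u" and v: "x2 = y2 * v"
    by (auto elim!: dvdE)
  have "coprime u v" "u > 0" "v > 0"
    using assms(2,5,6) u v by auto
  then have "f (u * v) = f u * f v"
    using f unfolding multiplicative_arith_def by blast
  then show ?thesis
    using True assms(5,6) unfolding arith_at_quot_def u v
    by (simp add: mult_dvd_mono ac_simps)
next
  case False
  have "\<not> y1 * y2 dvd x1 * x2"
    using False assms(3,4)
    by (metis coprime_commute coprime_dvd_mult_left_iff coprime_dvd_mult_right_iff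
        dvd_mult_left dvd_mult_right)
  then show ?thesis
    using False unfolding arith_at_quot_def by auto
qed

lemma prod_arith_at_quot_chain_mult:
  fixes u v :: "nat \<Rightarrow> nat"
  assumes "\<forall>j\<in>J. multiplicative_arith (f j)"
    and "\<forall>i k. coprime (u i) (v k)"
    and "\<forall>j\<in>J. u (j - 1) > 0 \<and> v (j - 1) > 0"
  shows "(\<Prod>j\<in>J. arith_at_quot (f j) (u (j - 1) * v (j - 1)) (u j * v j))
    = (\<Prod>j\<in>J. arith_at_quot (f j) (u (j - 1)) (u j))
      * (\<Prod>j\<in>J. arith_at_quot (f j) (v (j - 1)) (v j))"
  unfolding prod.distrib[symmetric]
  using assms by (intro prod.cong refl arith_at_quot_mult) auto

lemma gcd_power_dvd_if_coprime:
  fixes e c x y :: nat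
  assumes "e ^ k dvd x * y" and "coprime c y"
  shows "gcd e c ^ k dvd x"
proof -
  have "gcd e c ^ k dvd x * y"
    using assms(1) by (meson dvd_power_same dvd_trans gcd_dvd1)
  moreover have "coprime (gcd e c ^ k) y"
    using assms(2) by (meson coprime_divisors coprime_power_left_iff dvd_refl gcd_dvd2)
  ultimately show ?thesis
    by (simp add: coprime_dvd_mult_left_iff)
qed

lemma bij_betw_mult_dvd_Gcd:
  fixes a b :: "'i \<Rightarrow> nat"
  assumes "k \<ge> 1" and "I \<noteq> {}" and cop: "\<forall>i\<in>I. \<forall>i'\<in>I. coprime (a i) (b i')"
  shows "bij_betw (\<lambda>(x, y). x * y)
    ({x. x > 0 \<and> x ^ k dvd Gcd (a ` I)} \<times> {y. y > 0 \<and> y ^ k dvd Gcd (b ` I)})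
    {e. e > 0 \<and> e ^ k dvd Gcd ((\<lambda>i. a i * b i) ` I)}"
    (is "bij_betw _ (?A \<times> ?B) ?E")
proof -
  obtain r where r: "r \<in> I"
    using \<open>I \<noteq> {}\<close> by blast
  show ?thesis
  proof (rule bij_betw_byWitness[where f' = "\<lambda>e. (gcd e (a r), gcd e (b r))"])
    show "\<forall>p\<in>?A \<times> ?B. (gcd (case p of (x, y) \<Rightarrow> x * y) (a r),
        gcd (case p of (x, y) \<Rightarrow> x * y) (b r)) = p"
    proof (clarsimp simp: dvd_Gcd_iff)
      fix x y assume "\<forall>i\<in>I. x ^ k dvd a i" "\<forall>i\<in>I. y ^ k dvd b i"
      then have "x dvd a r" "y dvd b r"
        using r power_dvd_imp_dvd[OF \<open>k \<ge> 1\<close>] by blast+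
      moreover have "coprime (a r) (b r)"
        using cop r by blast
      ultimately have "coprime (a r) y" "coprime (b r) x"
        by (meson coprime_divisors coprime_commute dvd_refl)+
      then show "gcd (x * y) (a r) = x \<and> gcd (x * y) (b r) = y"
        using \<open>x dvd a r\<close> \<open>y dvd b r\<close>
        by (simp add: gcd_mult_left_right_cancel gcd_mult_left_left_cancel gcd_nat.absorb1)
    qed
    show "\<forall>e\<in>?E. (case (gcd e (a r), gcd e (b r)) of (x, y) \<Rightarrow> x * y) = e"
    proof (clarsimp simp: dvd_Gcd_iff)
      fix e assume "\<forall>i\<in>I. e ^ k dvd a i * b i"
      then have "e dvd a r * b r"
        using r power_dvd_imp_dvd[OF \<open>k \<ge> 1\<close>] by blast
      then show "gcd e (a r) * gcd e (b r) = e"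
        using cop r by (simp add: gcd_mult_gcd_eq_self)
    qed
    show "(\<lambda>(x, y). x * y) ` (?A \<times> ?B) \<subseteq> ?E"
      by (auto simp: dvd_Gcd_iff power_mult_distrib intro!: mult_dvd_mono)
    show "(\<lambda>e. (gcd e (a r), gcd e (b r))) ` ?E \<subseteq> ?A \<times> ?B"
    proof (rule image_subsetI)
      fix e assume "e \<in> ?E"
      then have "e > 0" and e: "\<forall>i\<in>I. e ^ k dvd a i * b i"
        by (simp_all add: dvd_Gcd_iff)
      have "gcd e (a r) ^ k dvd a i" "gcd e (b r) ^ k dvd b i" if "i \<in> I" for i
        using gcd_power_dvd_if_coprime[of e k "a i" "b i" "a r"]
          gcd_power_dvd_if_coprime[of e k "b i" "a i" "b r"] e cop r that
        by (simp_all add: mult.commute coprime_commute)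
      then show "(gcd e (a r), gcd e (b r)) \<in> ?A \<times> ?B"
        using \<open>e > 0\<close> by (simp add: dvd_Gcd_iff)
    qed
  qed
qed

lemma bij_betw_PiE_pointwise:
  assumes "\<And>j. j \<in> J \<Longrightarrow> bij_betw (\<lambda>(x, y). g x y) (S j \<times> T j) (U j)"
  shows "bij_betw (\<lambda>(s, t). \<lambda>j\<in>J. g (s j) (t j)) (Pi\<^sub>E J S \<times> Pi\<^sub>E J T) (Pi\<^sub>E J U)"
proof (rule bij_betwI')
  fix p q assume p: "p \<in> Pi\<^sub>E J S \<times> Pi\<^sub>E J T" and q: "q \<in> Pi\<^sub>E J S \<times> Pi\<^sub>E J T"
  have inj: "g (fst p j) (snd p j) = g (fst q j) (snd q j)
      \<longleftrightarrow> fst p j = fst q j \<and> snd p j = snd q j" if "j \<in> J" for j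
  proof -
    have "inj_on (\<lambda>(x, y). g x y) (S j \<times> T j)"
      using assms[OF that] by (rule bij_betw_imp_inj_on)
    moreover have "(fst p j, snd p j) \<in> S j \<times> T j" "(fst q j, snd q j) \<in> S j \<times> T j"
      using p q that by (auto simp: PiE_iff)
    ultimately show ?thesis
      using inj_on_eq_iff by fastforce
  qed
  show "((\<lambda>(s, t). \<lambda>j\<in>J. g (s j) (t j)) p = (\<lambda>(s, t). \<lambda>j\<in>J. g (s j) (t j)) q) = (p = q)"
  proof
    assume eq: "(\<lambda>(s, t). \<lambda>j\<in>J. g (s j) (t j)) p = (\<lambda>(s, t). \<lambda>j\<in>J. g (s j) (t j)) q"
    have "fst p j = fst q j \<and> snd p j = snd q j" if "j \<in> J" for j
      using fun_cong[OF eq, of j] inj[OF that] that by (simp add: case_prod_unfold)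
    then show "p = q"
      using p q by (auto simp: prod_eq_iff mem_Times_iff intro: PiE_ext)
  qed simp
next
  fix p assume p: "p \<in> Pi\<^sub>E J S \<times> Pi\<^sub>E J T"
  have "g (fst p j) (snd p j) \<in> U j" if "j \<in> J" for j
  proof -
    have "(fst p j, snd p j) \<in> S j \<times> T j"
      using p that by (auto simp: PiE_iff)
    then show ?thesis
      using bij_betwE[OF assms[OF that]] by fastforce
  qed
  then show "(\<lambda>(s, t). \<lambda>j\<in>J. g (s j) (t j)) p \<in> Pi\<^sub>E J U"
    by (simp add: case_prod_unfold)
next
  fix u assume u: "u \<in> Pi\<^sub>E J U"
  have "\<forall>j\<in>J. \<exists>p\<in>S j \<times> T j. u j = g (fst p) (snd p)"
    using u assms by (force simp: bij_betw_def)
  then obtain P where P: "\<forall>j\<in>J. P j \<in> S j \<times> T j \<and> u j = g (fst (P j)) (snd (P j))"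
    by metis
  show "\<exists>p\<in>Pi\<^sub>E J S \<times> Pi\<^sub>E J T. u = (\<lambda>(s, t). \<lambda>j\<in>J. g (s j) (t j)) p"
  proof (intro bexI)
    show "u = (\<lambda>(s, t). \<lambda>j\<in>J. g (s j) (t j)) (\<lambda>j\<in>J. fst (P j), \<lambda>j\<in>J. snd (P j))"
      using u P by (auto intro!: PiE_ext)
  qed (use P in auto)
qed

definition ramanujan_tuples :: "nat \<Rightarrow> (nat \<Rightarrow> nat) \<Rightarrow> (nat \<Rightarrow> nat) \<Rightarrow> (nat \<Rightarrow> nat) set" where
  "ramanujan_tuples m \<gamma> n = (\<Pi>\<^sub>E j\<in>{1..m}. {e. e > 0 \<and> e ^ \<gamma> j dvd Gcd (n ` {1..j+1})})"

definition ramanujan_chain ::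
  "nat \<Rightarrow> (nat \<Rightarrow> nat) \<Rightarrow> (nat \<Rightarrow> nat) \<Rightarrow> (nat \<Rightarrow> nat) \<Rightarrow> nat \<Rightarrow> nat" where
  "ramanujan_chain m \<gamma> n d j = (if j = 0 then n 1 else if j \<le> m then d j ^ \<gamma> j else 1)"

definition ramanujan_term ::
  "nat \<Rightarrow> (nat \<Rightarrow> nat) \<Rightarrow> (nat \<Rightarrow> nat \<Rightarrow> complex) \<Rightarrow> (nat \<Rightarrow> nat) \<Rightarrow> (nat \<Rightarrow> nat) \<Rightarrow> complex" where
  "ramanujan_term m \<gamma> f n d =
     (\<Prod>j\<in>{1..m+1}. arith_at_quot (f j) (ramanujan_chain m \<gamma> n d (j - 1)) (ramanujan_chain m \<gamma> n d j))"

lemma multiple_ramanujan_sum_eq: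
  assumes "m \<ge> 1"
  shows "multiple_ramanujan_sum m \<gamma> f n = (\<Sum>d\<in>ramanujan_tuples m \<gamma> n. ramanujan_term m \<gamma> f n d)"
proof -
  have term_eq: "ramanujan_term m \<gamma> f n d =
      arith_at_quot (f 1) (n 1) (d 1 ^ \<gamma> 1)
      * (\<Prod>j\<in>{2..m}. arith_at_quot (f j) (d (j - 1) ^ \<gamma> (j - 1)) (d j ^ \<gamma> j))
      * f (m + 1) (d m ^ \<gamma> m)" for d
  proof -
    let ?F = "\<lambda>j. arith_at_quot (f j) (ramanujan_chain m \<gamma> n d (j - 1)) (ramanujan_chain m \<gamma> n d j)"
    have "{1..m+1} = insert 1 (insert (m + 1) {2..m})"
      using assms by auto
    then have "ramanujan_term m \<gamma> f n d = ?F 1 * (?F (m + 1) * prod ?F {2..m})"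
      using assms unfolding ramanujan_term_def by simp
    also have "prod ?F {2..m}
        = (\<Prod>j\<in>{2..m}. arith_at_quot (f j) (d (j - 1) ^ \<gamma> (j - 1)) (d j ^ \<gamma> j))"
      by (rule prod.cong) (auto simp: ramanujan_chain_def)
    finally show ?thesis
      using assms by (simp add: ramanujan_chain_def arith_at_quot_def ac_simps)
  qed
  show ?thesis
    unfolding multiple_ramanujan_sum_def ramanujan_tuples_def term_eq ..
qed

lemma ramanujan_chain_mult:
  "ramanujan_chain m \<gamma> (\<lambda>i. a i * b i) (\<lambda>j\<in>{1..m}. d1 j * d2 j) j
    = ramanujan_chain m \<gamma> a d1 j * ramanujan_chain m \<gamma> b d2 j"
  by (simp add: ramanujan_chain_def power_mult_distrib)

lemma ramanujan_tuples_dvd_first: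
  assumes "d \<in> ramanujan_tuples m \<gamma> n" and "j \<in> {1..m}" and "\<gamma> j \<ge> 1"
  shows "d j dvd n 1"
proof -
  have "d j ^ \<gamma> j dvd n 1"
    using assms(1,2) by (auto simp: ramanujan_tuples_def PiE_iff dvd_Gcd_iff)
  then show ?thesis
    using assms(3) by (rule power_dvd_imp_dvd[rotated])
qed

lemma ramanujan_chain_coprime:
  assumes "coprime (n 1) c" and "d \<in> ramanujan_tuples m \<gamma> n" and "\<forall>j\<in>{1..m}. \<gamma> j \<ge> 1"
  shows "coprime (ramanujan_chain m \<gamma> n d j) c"
proof -
  consider "j = 0" | "j \<in> {1..m}" | "j > m"
    by fastforce
  then show ?thesis
  proof cases
    case 2
    then have "d j dvd n 1"
      using assms(2,3) by (intro ramanujan_tuples_dvd_first) auto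
    then have "coprime (d j) c"
      using assms(1) coprime_divisors dvd_refl by blast
    then show ?thesis
      using 2 by (simp add: ramanujan_chain_def)
  qed (use assms(1) in \<open>auto simp: ramanujan_chain_def\<close>)
qed

lemma ramanujan_chain_pos:
  assumes "n 1 > 0" and "d \<in> ramanujan_tuples m \<gamma> n"
  shows "ramanujan_chain m \<gamma> n d j > 0"
  using assms by (auto simp: ramanujan_chain_def ramanujan_tuples_def PiE_iff)

lemma ramanujan_term_mult:
  assumes "\<forall>j\<in>{1..m}. \<gamma> j \<ge> 1" and "\<forall>j\<in>{1..m+1}. multiplicative_arith (f j)"
    and "coprime (a 1) (b 1)" and "a 1 > 0" and "b 1 > 0"
    and "d1 \<in> ramanujan_tuples m \<gamma> a" and "d2 \<in> ramanujan_tuples m \<gamma> b"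
  shows "ramanujan_term m \<gamma> f (\<lambda>i. a i * b i) (\<lambda>j\<in>{1..m}. d1 j * d2 j)
    = ramanujan_term m \<gamma> f a d1 * ramanujan_term m \<gamma> f b d2"
proof -
  have "coprime (ramanujan_chain m \<gamma> a d1 i) (ramanujan_chain m \<gamma> b d2 k)" for i k
    using assms(1,3,6,7)
    by (metis coprime_commute ramanujan_chain_coprime)
  then show ?thesis
    unfolding ramanujan_term_def ramanujan_chain_mult
    using assms(2,4-7) by (intro prod_arith_at_quot_chain_mult) (auto intro: ramanujan_chain_pos)
qed

lemma ramanujan_tuples_mult_bij:
  assumes "\<forall>j\<in>{1..m}. \<gamma> j \<ge> 1" and "\<forall>i\<in>{1..m+1}. \<forall>i'\<in>{1..m+1}. coprime (a i) (b i')"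
  shows "bij_betw (\<lambda>(d1, d2). \<lambda>j\<in>{1..m}. d1 j * d2 j)
    (ramanujan_tuples m \<gamma> a \<times> ramanujan_tuples m \<gamma> b) (ramanujan_tuples m \<gamma> (\<lambda>i. a i * b i))"
  unfolding ramanujan_tuples_def
  using assms by (intro bij_betw_PiE_pointwise bij_betw_mult_dvd_Gcd) auto

theorem proposition2p6:
  fixes m :: nat and \<gamma> :: "nat \<Rightarrow> nat" and f :: "nat \<Rightarrow> nat \<Rightarrow> complex"
  assumes "m \<ge> 1"
    and "\<forall>j\<in>{1..m}. \<gamma> j \<ge> 1"
    and "\<forall>j\<in>{1..m+1}. multiplicative_arith (f j)"
  shows "multiplicative_multi (m + 1) (multiple_ramanujan_sum m \<gamma> f)"
  unfolding multiplicative_multi_def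
proof (intro allI impI)
  fix a b :: "nat \<Rightarrow> nat"
  assume pos: "\<forall>i\<in>{1..m+1}. a i > 0 \<and> b i > 0"
    and "coprime (\<Prod>i\<in>{1..m+1}. a i) (\<Prod>i\<in>{1..m+1}. b i)"
  then have cop: "\<forall>i\<in>{1..m+1}. \<forall>i'\<in>{1..m+1}. coprime (a i) (b i')"
    by (meson coprime_divisors dvd_prodI finite_atLeastAtMost)
  let ?T = "ramanujan_tuples m \<gamma>" and ?t = "ramanujan_term m \<gamma> f" and ?ab = "\<lambda>i. a i * b i"
  have "multiple_ramanujan_sum m \<gamma> f ?ab = sum (?t ?ab) (?T ?ab)"
    by (rule multiple_ramanujan_sum_eq[OF assms(1)])
  also have "\<dots> = (\<Sum>(d1, d2)\<in>?T a \<times> ?T b. ?t ?ab (\<lambda>j\<in>{1..m}. d1 j * d2 j))"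
    using sum.reindex_bij_betw[OF ramanujan_tuples_mult_bij[OF assms(2) cop], of "?t ?ab"]
    by (simp add: case_prod_unfold)
  also have "\<dots> = (\<Sum>(d1, d2)\<in>?T a \<times> ?T b. ?t a d1 * ?t b d2)"
  proof (intro sum.cong refl, clarify)
    fix d1 d2 assume "d1 \<in> ?T a" "d2 \<in> ?T b"
    then show "?t ?ab (\<lambda>j\<in>{1..m}. d1 j * d2 j) = ?t a d1 * ?t b d2"
      using assms(2,3) pos cop by (intro ramanujan_term_mult) auto
  qed
  also have "\<dots> = multiple_ramanujan_sum m \<gamma> f a * multiple_ramanujan_sum m \<gamma> f b"
    by (simp add: multiple_ramanujan_sum_eq[OF assms(1)] sum_product sum.cartesian_product)
  finally show "multiple_ramanujan_sum m \<gamma> f (\<lambda>i. a i * b i)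
      = multiple_ramanujan_sum m \<gamma> f a * multiple_ramanujan_sum m \<gamma> f b" .
qed

end
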